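(* Let $H$ be the graph consisting of two triangles $uv_1v_2$ and $uw_1w_2$ sharing exactly the vertex $u$. Let $G$ be a graph with $n$ vertices obtained from $H$ by attaching pendant edges (new leaves) to vertices of $H$, such that $a\ge1$ pendant edges are attached to $u$ and the remaining pendant edges are attached to exactly $d$ of the vertices $v_1,v_2,w_1,w_2$, where $1\le d\le 4$. Then $\operatorname{avm}(G)>\operatorname{avm}(R_n(3,3))$.
   Context: $\operatorname{avm}(G)$ is the average of $|M|$ over all maximal matchings $M$ of $G$ (a matching is maximal if not properly contained in another matching). For $n\ge 6$, $R_n(3,3)$ is the graph obtained from $H$ by attaching $n-5$ pendant edges (new leaves) to $v_1$. *)

theory Defs
  imports Complex_Main
begin

text \<open>Graphs are given by their edge sets (sets of 2-element vertex sets).\<close>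

definition matching :: "'a set set \<Rightarrow> 'a set set \<Rightarrow> bool" where
  "matching E M \<longleftrightarrow> M \<subseteq> E \<and> (\<forall>e1\<in>M. \<forall>e2\<in>M. e1 \<noteq> e2 \<longrightarrow> e1 \<inter> e2 = {})"

definition maximal_matching :: "'a set set \<Rightarrow> 'a set set \<Rightarrow> bool" where
  "maximal_matching E M \<longleftrightarrow> matching E M \<and> (\<nexists>M'. matching E M' \<and> M \<subset> M')"

definition avm :: "'a set set \<Rightarrow> real" where
  "avm E = (\<Sum>M\<in>{M. maximal_matching E M}. real (card M)) / real (card {M. maximal_matching E M})"

text \<open>Vertices: Core 0 = u, Core 1 = v1, Core 2 = v2, Core 3 = w1, Core 4 = w2;
  Leaf i j is the j-th pendant leaf attached to Core i.\<close>
datatype vtx = Core nat | Leaf nat nat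

definition H_edges :: "vtx set set" where
  "H_edges = {{Core 0, Core 1}, {Core 0, Core 2}, {Core 1, Core 2},
              {Core 0, Core 3}, {Core 0, Core 4}, {Core 3, Core 4}}"

definition pendant_graph :: "(nat \<Rightarrow> nat) \<Rightarrow> vtx set set" where
  "pendant_graph k = H_edges \<union> {{Core i, Leaf i j} | i j. i < 5 \<and> j < k i}"

definition R33 :: "nat \<Rightarrow> vtx set set" where
  "R33 n = pendant_graph (\<lambda>i. if i = 1 then n - 5 else 0)"

end

(*
  A maximal matching of a graph obtained by attaching pendant edges to a leaf-free core
  graph C splits into its core part N, a matching of C in which every edge of C missed
  by N meets a core vertex carrying pendants, and the choice of one pendant edge at each
  pendant-carrying core vertex left uncovered by N; conversely, every such pair yields a
  maximal matching. Summing over the twelve matchings of the bowtie H, the number of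
  maximal matchings and their total size are therefore explicit polynomials in the
  numbers of pendants. For R_n(3,3) they are 3m + 4 and 7m + 8 with m = n - 5, so its
  average lies below 7/3. When u and at least one of v1, v2, w1, w2 carry pendants, the
  total exceeds 7/3 times the number; this is checked over the zero patterns of the
  pendant numbers at v1, v2, w1, w2.
*)

theory Submission
  imports Defs "HOL-Library.FuncSet"
begin

lemma maximal_matching_iff:
  assumes "{} \<notin> E"
  shows "maximal_matching E M \<longleftrightarrow> matching E M \<and> (\<forall>e\<in>E - M. \<exists>f\<in>M. f \<inter> e \<noteq> {})"
proof
  assume "maximal_matching E M"
  then have M: "matching E M" and no_ext: "\<nexists>M'. matching E M' \<and> M \<subset> M'"
    by (auto simp: maximal_matching_def)
  have "\<exists>f\<in>M. f \<inter> e \<noteq> {}" if e: "e \<in> E - M" for e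
  proof (rule ccontr)
    assume "\<not> ?thesis"
    then have "matching E (insert e M)"
      using M e unfolding matching_def by (simp add: Int_commute)
    then show False
      using no_ext e by blast
  qed
  with M show "matching E M \<and> (\<forall>e\<in>E - M. \<exists>f\<in>M. f \<inter> e \<noteq> {})"
    by blast
next
  assume M: "matching E M \<and> (\<forall>e\<in>E - M. \<exists>f\<in>M. f \<inter> e \<noteq> {})"
  have False if M': "matching E M'" "M \<subset> M'" for M'
  proof -
    obtain e where e: "e \<in> M'" "e \<notin> M"
      using \<open>M \<subset> M'\<close> by blast
    then have "e \<in> E - M"
      using M' by (auto simp: matching_def)
    then obtain f where f: "f \<in> M" "f \<inter> e \<noteq> {}"
      using M by blast
    moreover have "f \<in> M'" "f \<noteq> e"
      using f e M' by auto
    ultimately show False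
      using e M' unfolding matching_def by blast
  qed
  with M show "maximal_matching E M"
    by (auto simp: maximal_matching_def)
qed

lemma matching_Int: "matching E M \<Longrightarrow> matching C (M \<inter> C)"
  unfolding matching_def by auto

definition attach_pendants :: "vtx set set \<Rightarrow> (nat \<Rightarrow> nat) \<Rightarrow> vtx set set" where
  "attach_pendants C k = C \<union> {{Core i, Leaf i j} | i j. i < 5 \<and> j < k i}"

definition pendant_cores :: "(nat \<Rightarrow> nat) \<Rightarrow> nat set" where
  "pendant_cores k = {i. i < 5 \<and> 0 < k i}"

definition pendant_dominated :: "vtx set set \<Rightarrow> (nat \<Rightarrow> nat) \<Rightarrow> vtx set set \<Rightarrow> bool" where
  "pendant_dominated C k N \<longleftrightarrow> (\<forall>e\<in>C. e \<inter> \<Union>N = {} \<longrightarrow> e \<inter> Core ` pendant_cores k \<noteq> {})"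

definition free_pendant_cores :: "(nat \<Rightarrow> nat) \<Rightarrow> vtx set set \<Rightarrow> nat set" where
  "free_pendant_cores k N = {i \<in> pendant_cores k. Core i \<notin> \<Union>N}"

definition chosen_pendants :: "(nat \<Rightarrow> nat) \<Rightarrow> nat set \<Rightarrow> vtx set set" where
  "chosen_pendants \<sigma> A = (\<lambda>i. {Core i, Leaf i (\<sigma> i)}) ` A"

lemma pendant_core_covered:
  assumes "i \<in> pendant_cores k"
  shows "Core i \<in> \<Union>(N \<union> chosen_pendants \<sigma> (free_pendant_cores k N))"
proof (cases "Core i \<in> \<Union>N")
  case False
  with assms have "i \<in> free_pendant_cores k N"
    by (simp add: free_pendant_cores_def)
  then show ?thesis
    by (auto simp: chosen_pendants_def)
qed simp

lemma finite_free_pendant_cores: "finite (free_pendant_cores k N)"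
  by (rule finite_subset[of _ "{..<5}"]) (auto simp: free_pendant_cores_def pendant_cores_def)

lemma pendant_edge_unique:
  assumes "matching E M" "{Core i, Leaf i j} \<in> M" "{Core i, Leaf i j'} \<in> M"
  shows "j = j'"
proof (rule ccontr)
  assume "j \<noteq> j'"
  then have "{Core i, Leaf i j} \<noteq> {Core i, Leaf i j'}"
    by (simp add: doubleton_eq_iff)
  then have "{Core i, Leaf i j} \<inter> {Core i, Leaf i j'} = {}"
    using assms unfolding matching_def by (meson bspec)
  then show False
    by simp
qed

lemma inj_on_chosen_pendants: "inj_on (\<lambda>\<sigma>. chosen_pendants \<sigma> A) (\<Pi>\<^sub>E i\<in>A. B i)"
proof (rule inj_onI)
  fix \<sigma> \<sigma>' assume \<sigma>: "\<sigma> \<in> (\<Pi>\<^sub>E i\<in>A. B i)" "\<sigma>' \<in> (\<Pi>\<^sub>E i\<in>A. B i)"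
    and eq: "chosen_pendants \<sigma> A = chosen_pendants \<sigma>' A"
  have pointwise: "\<sigma> i = \<sigma>' i" if "i \<in> A" for i
  proof -
    have "{Core i, Leaf i (\<sigma> i)} \<in> chosen_pendants \<sigma>' A"
      using eq that unfolding chosen_pendants_def by blast
    then show ?thesis
      unfolding chosen_pendants_def by (auto simp: doubleton_eq_iff)
  qed
  show "\<sigma> = \<sigma>'"
    by (rule PiE_ext[OF \<sigma> pointwise])
qed

lemma card_chosen_pendants: "card (chosen_pendants \<sigma> A) = card A"
  unfolding chosen_pendants_def by (rule card_image) (auto intro: inj_onI simp: doubleton_eq_iff)

locale core_graph =
  fixes C :: "vtx set set"
  assumes finite_core: "finite C"
    and empty_notin_core: "{} \<notin> C"
    and Leaf_notin_core: "e \<in> C \<Longrightarrow> Leaf i j \<notin> e"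
begin

lemma empty_notin_attach_pendants: "{} \<notin> attach_pendants C k"
  using empty_notin_core by (auto simp: attach_pendants_def)

lemma attach_pendants_cases:
  assumes "f \<in> attach_pendants C k"
  obtains "f \<in> C" | i j where "f = {Core i, Leaf i j}" "i < 5" "j < k i"
  using assms unfolding attach_pendants_def by blast

lemma chosen_pendants_disjoint_core: "chosen_pendants \<sigma> A \<inter> C = {}"
  using Leaf_notin_core by (auto simp: chosen_pendants_def)

lemma core_part_chosen_pendants:
  "matching C N \<Longrightarrow> (N \<union> chosen_pendants \<sigma> A) \<inter> C = N"
  using chosen_pendants_disjoint_core[of \<sigma> A] by (auto simp: matching_def)

lemma maximal_matching_core_dominated:
  assumes M: "maximal_matching (attach_pendants C k) M"
  shows "pendant_dominated C k (M \<inter> C)"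
proof -
  have M_matching: "matching (attach_pendants C k) M"
    and M_max: "\<forall>e\<in>attach_pendants C k - M. \<exists>f\<in>M. f \<inter> e \<noteq> {}"
    using M maximal_matching_iff[OF empty_notin_attach_pendants] by auto
  show ?thesis
    unfolding pendant_dominated_def
  proof (intro ballI impI)
    fix e assume e: "e \<in> C" "e \<inter> \<Union>(M \<inter> C) = {}"
    have "e \<notin> M"
    proof
      assume "e \<in> M"
      then have "e \<inter> \<Union>(M \<inter> C) = e"
        using e(1) by blast
      with e empty_notin_core show False
        by simp
    qed
    with e have "e \<in> attach_pendants C k - M"
      by (simp add: attach_pendants_def)
    then obtain f where f: "f \<in> M" "f \<inter> e \<noteq> {}"
      using M_max by blast
    then have "f \<in> attach_pendants C k"
      using M_matching by (auto simp: matching_def)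
    then show "e \<inter> Core ` pendant_cores k \<noteq> {}"
    proof (cases rule: attach_pendants_cases)
      case 1
      with f e have False
        by blast
      then show ?thesis ..
    next
      case (2 i j)
      then have "Core i \<in> e"
        using f Leaf_notin_core[OF \<open>e \<in> C\<close>] by auto
      moreover have "Core i \<in> Core ` pendant_cores k"
        using 2 by (simp add: pendant_cores_def)
      ultimately show ?thesis
        by blast
    qed
  qed
qed

lemma matching_pendant_edge:
  assumes M: "matching (attach_pendants C k) M" and e: "{Core i, Leaf i j} \<in> M"
  shows "i \<in> free_pendant_cores k (M \<inter> C)" and "j < k i"
proof -
  have "{Core i, Leaf i j} \<in> attach_pendants C k"
    using M e by (auto simp: matching_def)
  then have ij: "i < 5 \<and> j < k i"
  proof (cases rule: attach_pendants_cases)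
    case 1
    then show ?thesis
      using Leaf_notin_core by blast
  next
    case (2 i' j')
    then show ?thesis
      by (auto simp: doubleton_eq_iff)
  qed
  have "Core i \<notin> f" if f: "f \<in> M \<inter> C" for f
  proof
    assume "Core i \<in> f"
    have "f \<noteq> {Core i, Leaf i j}"
      using f Leaf_notin_core by blast
    with f e M have "f \<inter> {Core i, Leaf i j} = {}"
      unfolding matching_def by (meson IntD1 bspec)
    with \<open>Core i \<in> f\<close> show False
      by blast
  qed
  with ij show "i \<in> free_pendant_cores k (M \<inter> C)" "j < k i"
    by (auto simp: free_pendant_cores_def pendant_cores_def)
qed

lemma maximal_matching_covers_free_core:
  assumes M: "maximal_matching (attach_pendants C k) M"
    and i: "i \<in> free_pendant_cores k (M \<inter> C)"
  shows "\<exists>j<k i. {Core i, Leaf i j} \<in> M"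
proof (rule ccontr)
  assume uncovered: "\<not> ?thesis"
  have M_matching: "matching (attach_pendants C k) M"
    and M_max: "\<forall>e\<in>attach_pendants C k - M. \<exists>f\<in>M. f \<inter> e \<noteq> {}"
    using M maximal_matching_iff[OF empty_notin_attach_pendants] by auto
  have "{Core i, Leaf i 0} \<in> attach_pendants C k - M"
    using i uncovered by (auto simp: attach_pendants_def free_pendant_cores_def pendant_cores_def)
  then obtain f where f: "f \<in> M" "f \<inter> {Core i, Leaf i 0} \<noteq> {}"
    using M_max by blast
  then have "f \<in> attach_pendants C k"
    using M_matching by (auto simp: matching_def)
  then show False
  proof (cases rule: attach_pendants_cases)
    case 1
    then have "Core i \<in> f"
      using f Leaf_notin_core by blast
    with 1 f i show False
      by (auto simp: free_pendant_cores_def pendant_cores_def)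
  next
    case (2 i' j')
    with f uncovered show False
      by auto
  qed
qed

lemma maximal_matching_decompose:
  assumes M: "maximal_matching (attach_pendants C k) M"
  defines "A \<equiv> free_pendant_cores k (M \<inter> C)"
  obtains \<sigma> where "\<sigma> \<in> (\<Pi>\<^sub>E i\<in>A. {..<k i})" and "M = M \<inter> C \<union> chosen_pendants \<sigma> A"
proof
  define \<sigma> where "\<sigma> = restrict (\<lambda>i. SOME j. j < k i \<and> {Core i, Leaf i j} \<in> M) A"
  have \<sigma>: "\<sigma> i < k i" "{Core i, Leaf i (\<sigma> i)} \<in> M" if "i \<in> A" for i
    using someI_ex[OF maximal_matching_covers_free_core[OF M that[unfolded A_def]]] that
    by (auto simp: \<sigma>_def)
  then show "\<sigma> \<in> (\<Pi>\<^sub>E i\<in>A. {..<k i})"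
    by (auto simp: \<sigma>_def)
  have M_matching: "matching (attach_pendants C k) M"
    using M by (simp add: maximal_matching_def)
  have "e \<in> chosen_pendants \<sigma> A" if e: "e \<in> M" "e \<notin> C" for e
  proof -
    have "e \<in> attach_pendants C k"
      using e M_matching by (auto simp: matching_def)
    then obtain i j where ij: "e = {Core i, Leaf i j}"
      using e(2) by (cases rule: attach_pendants_cases) auto
    then have "i \<in> A"
      using matching_pendant_edge[OF M_matching] e(1) by (simp add: A_def)
    then have "j = \<sigma> i"
      using pendant_edge_unique[OF M_matching] \<sigma>(2) e(1) ij by blast
    with \<open>i \<in> A\<close> ij show ?thesis
      by (auto simp: chosen_pendants_def)
  qed
  moreover have "chosen_pendants \<sigma> A \<subseteq> M"
    using \<sigma>(2) by (auto simp: chosen_pendants_def)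
  ultimately show "M = M \<inter> C \<union> chosen_pendants \<sigma> A"
    by blast
qed

lemma matching_compose:
  assumes N: "matching C N" and \<sigma>: "\<sigma> \<in> (\<Pi>\<^sub>E i\<in>free_pendant_cores k N. {..<k i})"
  shows "matching (attach_pendants C k) (N \<union> chosen_pendants \<sigma> (free_pendant_cores k N))"
proof -
  let ?A = "free_pendant_cores k N" and ?P = "chosen_pendants \<sigma> (free_pendant_cores k N)"
  have N_sub: "N \<subseteq> C" and N_disj: "\<forall>e1\<in>N. \<forall>e2\<in>N. e1 \<noteq> e2 \<longrightarrow> e1 \<inter> e2 = {}"
    using N by (auto simp: matching_def)
  have "?P \<subseteq> attach_pendants C k"
    using \<sigma> by (auto simp: chosen_pendants_def free_pendant_cores_def pendant_cores_def attach_pendants_def)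
  with N_sub have sub: "N \<union> ?P \<subseteq> attach_pendants C k"
    by (auto simp: attach_pendants_def)
  have core_pendant: "e \<inter> p = {}" if "e \<in> N" "p \<in> ?P" for e p
  proof -
    obtain i where i: "i \<in> ?A" "p = {Core i, Leaf i (\<sigma> i)}"
      using \<open>p \<in> ?P\<close> by (auto simp: chosen_pendants_def)
    then have "Core i \<notin> e"
      using \<open>e \<in> N\<close> by (auto simp: free_pendant_cores_def pendant_cores_def)
    moreover have "Leaf i (\<sigma> i) \<notin> e"
      using \<open>e \<in> N\<close> N_sub Leaf_notin_core by blast
    ultimately show ?thesis
      using i by auto
  qed
  have pendant_pendant: "p \<inter> q = {}" if "p \<in> ?P" "q \<in> ?P" "p \<noteq> q" for p q
    using that by (auto simp: chosen_pendants_def)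
  have "e1 \<inter> e2 = {}" if "e1 \<in> N \<union> ?P" "e2 \<in> N \<union> ?P" "e1 \<noteq> e2" for e1 e2
    using that N_disj core_pendant[of e1 e2] core_pendant[of e2 e1] pendant_pendant[of e1 e2]
    by (auto simp: Int_commute)
  with sub show ?thesis
    by (simp add: matching_def)
qed

lemma maximal_matching_compose:
  assumes N: "matching C N" and dom: "pendant_dominated C k N"
    and \<sigma>: "\<sigma> \<in> (\<Pi>\<^sub>E i\<in>free_pendant_cores k N. {..<k i})"
  shows "maximal_matching (attach_pendants C k) (N \<union> chosen_pendants \<sigma> (free_pendant_cores k N))"
proof -
  let ?M = "N \<union> chosen_pendants \<sigma> (free_pendant_cores k N)"
  have covered: "\<exists>f\<in>?M. Core i \<in> f" if "i \<in> pendant_cores k" for i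
    using pendant_core_covered[OF that] by blast
  have "\<exists>f\<in>?M. f \<inter> e \<noteq> {}" if e: "e \<in> attach_pendants C k" for e
    using e
  proof (cases rule: attach_pendants_cases)
    case 1
    show ?thesis
    proof (cases "e \<inter> \<Union>N = {}")
      case True
      then have "e \<inter> Core ` pendant_cores k \<noteq> {}"
        using dom 1 by (simp add: pendant_dominated_def)
      then obtain i where "i \<in> pendant_cores k" "Core i \<in> e"
        by blast
      with covered show ?thesis
        by blast
    next
      case False
      then show ?thesis
        by blast
    qed
  next
    case (2 i j)
    then have "i \<in> pendant_cores k"
      by (simp add: pendant_cores_def)
    with covered 2 show ?thesis
      by blast
  qed
  then show ?thesis
    using matching_compose[OF N \<sigma>] maximal_matching_iff[OF empty_notin_attach_pendants] by blast
qed

lemma maximal_matchings_attach_pendants: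
  "{M. maximal_matching (attach_pendants C k) M} =
     (\<lambda>(N, \<sigma>). N \<union> chosen_pendants \<sigma> (free_pendant_cores k N)) `
       (SIGMA N:{N. matching C N \<and> pendant_dominated C k N}. \<Pi>\<^sub>E i\<in>free_pendant_cores k N. {..<k i})"
  (is "_ = ?compose ` ?S")
proof (intro equalityI subsetI)
  fix M assume "M \<in> {M. maximal_matching (attach_pendants C k) M}"
  then have M: "maximal_matching (attach_pendants C k) M"
    by simp
  obtain \<sigma> where "\<sigma> \<in> (\<Pi>\<^sub>E i\<in>free_pendant_cores k (M \<inter> C). {..<k i})"
    and "M = M \<inter> C \<union> chosen_pendants \<sigma> (free_pendant_cores k (M \<inter> C))"
    using maximal_matching_decompose[OF M] .
  moreover have "M \<inter> C \<in> {N. matching C N \<and> pendant_dominated C k N}"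
    using M maximal_matching_core_dominated[OF M]
    by (auto simp: maximal_matching_def intro: matching_Int)
  ultimately show "M \<in> ?compose ` ?S"
    by (intro image_eqI[of _ _ "(M \<inter> C, \<sigma>)"]) auto
next
  fix M assume "M \<in> ?compose ` ?S"
  then show "M \<in> {M. maximal_matching (attach_pendants C k) M}"
    using maximal_matching_compose by auto
qed

lemma inj_on_compose:
  "inj_on (\<lambda>(N, \<sigma>). N \<union> chosen_pendants \<sigma> (free_pendant_cores k N))
     (SIGMA N:{N. matching C N \<and> pendant_dominated C k N}. \<Pi>\<^sub>E i\<in>free_pendant_cores k N. {..<k i})"
proof (rule inj_onI, clarsimp)
  fix N \<sigma> N' \<sigma>'
  assume N: "matching C N" "\<sigma> \<in> (\<Pi>\<^sub>E i\<in>free_pendant_cores k N. {..<k i})"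
    and N': "matching C N'" "\<sigma>' \<in> (\<Pi>\<^sub>E i\<in>free_pendant_cores k N'. {..<k i})"
    and eq: "N \<union> chosen_pendants \<sigma> (free_pendant_cores k N) =
      N' \<union> chosen_pendants \<sigma>' (free_pendant_cores k N')"
  have "N = N'"
    using core_part_chosen_pendants[OF N(1)] core_part_chosen_pendants[OF N'(1)] eq by metis
  have "N \<subseteq> C"
    using N(1) by (simp add: matching_def)
  then have "chosen_pendants \<tau> A = (N \<union> chosen_pendants \<tau> A) - N" for \<tau> A
    using chosen_pendants_disjoint_core[of \<tau> A] by blast
  then have "chosen_pendants \<sigma> (free_pendant_cores k N) = chosen_pendants \<sigma>' (free_pendant_cores k N)"
    using eq \<open>N = N'\<close> by metis
  then have "\<sigma> = \<sigma>'"
    using inj_on_chosen_pendants N(2) N'(2) \<open>N = N'\<close> by (metis inj_onD)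
  with \<open>N = N'\<close> show "N = N' \<and> \<sigma> = \<sigma>'"
    by blast
qed

lemma finite_dominated_matchings: "finite {N. matching C N \<and> pendant_dominated C k N}"
  by (rule finite_subset[of _ "Pow C"]) (auto simp: matching_def finite_core)

lemma card_compose:
  assumes "matching C N" and "finite A"
  shows "card (N \<union> chosen_pendants \<sigma> A) = card N + card A"
proof -
  have "finite N"
    using assms finite_core by (auto simp: matching_def intro: finite_subset)
  moreover have "N \<inter> chosen_pendants \<sigma> A = {}"
    using assms chosen_pendants_disjoint_core[of \<sigma> A] by (auto simp: matching_def)
  moreover have "finite (chosen_pendants \<sigma> A)"
    using \<open>finite A\<close> by (simp add: chosen_pendants_def)
  ultimately show ?thesis
    by (simp add: card_Un_disjoint card_chosen_pendants)
qed

lemma card_maximal_matchings_attach_pendants: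
  "card {M. maximal_matching (attach_pendants C k) M} =
     (\<Sum>N | matching C N \<and> pendant_dominated C k N. \<Prod>i\<in>free_pendant_cores k N. k i)"
  unfolding maximal_matchings_attach_pendants
  by (simp add: card_image[OF inj_on_compose] finite_dominated_matchings card_PiE
      finite_free_pendant_cores finite_PiE)

lemma sum_card_maximal_matchings_attach_pendants:
  "(\<Sum>M | maximal_matching (attach_pendants C k) M. card M) =
     (\<Sum>N | matching C N \<and> pendant_dominated C k N.
        (\<Prod>i\<in>free_pendant_cores k N. k i) * (card N + card (free_pendant_cores k N)))"
proof -
  let ?D = "{N. matching C N \<and> pendant_dominated C k N}"
    and ?\<Sigma> = "\<lambda>N. \<Pi>\<^sub>E i\<in>free_pendant_cores k N. {..<k i}"
  have "(\<Sum>M | maximal_matching (attach_pendants C k) M. card M) =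
      (\<Sum>(N, \<sigma>)\<in>Sigma ?D ?\<Sigma>. card (N \<union> chosen_pendants \<sigma> (free_pendant_cores k N)))"
    unfolding maximal_matchings_attach_pendants sum.reindex[OF inj_on_compose]
    by (simp add: case_prod_unfold)
  also have "\<dots> = (\<Sum>N\<in>?D. \<Sum>\<sigma>\<in>?\<Sigma> N. card (N \<union> chosen_pendants \<sigma> (free_pendant_cores k N)))"
    by (rule sum.Sigma[symmetric]) (simp_all add: finite_dominated_matchings finite_PiE finite_free_pendant_cores)
  also have "\<dots> = (\<Sum>N\<in>?D. (\<Prod>i\<in>free_pendant_cores k N. k i) * (card N + card (free_pendant_cores k N)))"
    by (rule sum.cong) (simp_all add: card_compose card_PiE finite_free_pendant_cores)
  finally show ?thesis .
qed

end

lemma avm_eq: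
  "avm E = real (\<Sum>M | maximal_matching E M. card M) / real (card {M. maximal_matching E M})"
  by (simp add: avm_def)

lemma frac_less_avm:
  fixes p q :: nat
  assumes "0 < card {M. maximal_matching E M}" and "0 < q"
    and "p * card {M. maximal_matching E M} < q * (\<Sum>M | maximal_matching E M. card M)"
  shows "real p / real q < avm E"
proof -
  have "real p * real (card {M. maximal_matching E M}) < real q * real (\<Sum>M | maximal_matching E M. card M)"
    using assms(3) by (metis of_nat_less_iff of_nat_mult)
  with assms(1,2) show ?thesis
    unfolding avm_eq by (simp add: field_simps del: of_nat_sum)
qed

lemma avm_less_frac:
  fixes p q :: nat
  assumes "0 < card {M. maximal_matching E M}" and "0 < q"
    and "q * (\<Sum>M | maximal_matching E M. card M) < p * card {M. maximal_matching E M}"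
  shows "avm E < real p / real q"
proof -
  have "real q * real (\<Sum>M | maximal_matching E M. card M) < real p * real (card {M. maximal_matching E M})"
    using assms(3) by (metis of_nat_less_iff of_nat_mult)
  with assms(1,2) show ?thesis
    unfolding avm_eq by (simp add: field_simps del: of_nat_sum)
qed

interpretation H: core_graph H_edges
  by unfold_locales (auto simp: H_edges_def)

lemma pendant_graph_eq: "pendant_graph k = attach_pendants H_edges k"
  by (simp add: pendant_graph_def attach_pendants_def)

definition H_matching_list :: "vtx set set list" where
  "H_matching_list = [{},
     {{Core 0, Core 1}}, {{Core 0, Core 2}}, {{Core 1, Core 2}},
     {{Core 0, Core 3}}, {{Core 0, Core 4}}, {{Core 3, Core 4}},
     {{Core 1, Core 2}, {Core 3, Core 4}}, {{Core 0, Core 1}, {Core 3, Core 4}},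
     {{Core 0, Core 2}, {Core 3, Core 4}}, {{Core 1, Core 2}, {Core 0, Core 3}},
     {{Core 1, Core 2}, {Core 0, Core 4}}]"

lemma H_matchings: "{N. matching H_edges N} = set H_matching_list"
proof (intro equalityI subsetI; clarify)
  fix N assume N: "matching H_edges N"
  then have "N \<in> Pow H_edges"
    by (simp add: matching_def)
  then show "N \<in> set H_matching_list"
    unfolding H_edges_def Pow_insert
    by simp (elim disjE; use N in \<open>simp add: matching_def H_matching_list_def H_edges_def doubleton_eq_iff\<close>)
next
  fix N assume "N \<in> set H_matching_list"
  then show "matching H_edges N"
    by (auto simp: H_matching_list_def matching_def H_edges_def)
qed

lemma sum_H_matchings:
  "(\<Sum>N | matching H_edges N \<and> P N. f N) = (\<Sum>N\<leftarrow>H_matching_list. if P N then f N else 0)"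
proof -
  have "distinct H_matching_list"
    by (simp add: H_matching_list_def doubleton_eq_iff)
  moreover have "{N. matching H_edges N \<and> P N} = {N \<in> set H_matching_list. P N}"
    using H_matchings by blast
  ultimately show ?thesis
    by (simp add: sum.inter_filter sum.distinct_set_conv_list)
qed

lemma prod_free_pendant_cores:
  "(\<Prod>i\<in>free_pendant_cores k N. k i) = (\<Prod>i\<in>{0,1,2,3,4}. if 0 < k i \<and> Core i \<notin> \<Union>N then k i else 1)"
proof -
  have "free_pendant_cores k N = {i \<in> {0,1,2,3,4}. 0 < k i \<and> Core i \<notin> \<Union>N}"
    by (auto simp: free_pendant_cores_def pendant_cores_def)
  then show ?thesis
    by (simp only:) (rule prod.inter_filter, simp)
qed

lemma card_free_pendant_cores:
  "card (free_pendant_cores k N) = (\<Sum>i\<in>{0,1,2,3,4}. if 0 < k i \<and> Core i \<notin> \<Union>N then 1 else 0)"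
proof -
  have "free_pendant_cores k N = {i \<in> {0,1,2,3,4}. 0 < k i \<and> Core i \<notin> \<Union>N}"
    by (auto simp: free_pendant_cores_def pendant_cores_def)
  then show ?thesis
    by (simp only: card_eq_sum) (rule sum.inter_filter, simp)
qed

lemma card_maximal_matchings_pendant_graph:
  "card {M. maximal_matching (pendant_graph k) M} =
     (\<Sum>N\<leftarrow>H_matching_list. if pendant_dominated H_edges k N
        then \<Prod>i\<in>free_pendant_cores k N. k i else 0)"
  unfolding pendant_graph_eq H.card_maximal_matchings_attach_pendants sum_H_matchings ..

lemma sum_card_maximal_matchings_pendant_graph:
  "(\<Sum>M | maximal_matching (pendant_graph k) M. card M) =
     (\<Sum>N\<leftarrow>H_matching_list. if pendant_dominated H_edges k N
        then (\<Prod>i\<in>free_pendant_cores k N. k i) * (card N + card (free_pendant_cores k N)) else 0)"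
  unfolding pendant_graph_eq H.sum_card_maximal_matchings_attach_pendants sum_H_matchings ..

lemmas pendant_graph_evaluation =
  card_maximal_matchings_pendant_graph sum_card_maximal_matchings_pendant_graph
  H_matching_list_def pendant_dominated_def pendant_cores_def H_edges_def
  prod_free_pendant_cores card_free_pendant_cores doubleton_eq_iff image_iff

lemma maximal_matchings_R33:
  assumes "5 < n"
  shows "card {M. maximal_matching (R33 n) M} = 3 * (n - 5) + 4"
    and "(\<Sum>M | maximal_matching (R33 n) M. card M) = 7 * (n - 5) + 8"
  using assms unfolding R33_def by (simp_all add: pendant_graph_evaluation)

lemma maximal_matchings_pendant_graph_bound:
  assumes "0 < k 0" and "\<exists>i\<in>{1..4}. 0 < k i"
  shows "0 < card {M. maximal_matching (pendant_graph k) M}"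
    and "7 * card {M. maximal_matching (pendant_graph k) M} <
      3 * (\<Sum>M | maximal_matching (pendant_graph k) M. card M)"
proof -
  obtain a where a: "k 0 = Suc a"
    using assms(1) by (cases "k 0") auto
  from assms(2) have "k 1 \<noteq> 0 \<or> k 2 \<noteq> 0 \<or> k 3 \<noteq> 0 \<or> k 4 \<noteq> 0"
    by (auto simp: numeral_eq_Suc atLeastAtMost_iff le_Suc_eq)
  with a have "0 < card {M. maximal_matching (pendant_graph k) M} \<and>
      7 * card {M. maximal_matching (pendant_graph k) M} <
      3 * (\<Sum>M | maximal_matching (pendant_graph k) M. card M)"
    by (cases "k 1"; cases "k 2"; cases "k 3"; cases "k 4"; simp add: pendant_graph_evaluation)
  then show "0 < card {M. maximal_matching (pendant_graph k) M}"
    and "7 * card {M. maximal_matching (pendant_graph k) M} <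
      3 * (\<Sum>M | maximal_matching (pendant_graph k) M. card M)"
    by auto
qed

theorem lemma3p4:
  fixes k :: "nat \<Rightarrow> nat" and a d n :: nat
  assumes "k 0 = a" and "a \<ge> 1"
    and "card {i \<in> {1..4}. k i > 0} = d" and "1 \<le> d" and "d \<le> 4"
    and "n = 5 + (\<Sum>i<5. k i)"
  shows "avm (pendant_graph k) > avm (R33 n)"
proof -
  have u: "0 < k 0"
    using assms(1,2) by simp
  have "{i \<in> {1..4}. k i > 0} \<noteq> {}"
    using assms(3,4) by (metis card.empty not_one_le_zero)
  then have outside_u: "\<exists>i\<in>{1..4}. 0 < k i"
    by blast
  have "k 0 \<le> (\<Sum>i<5. k i)"
    by (rule member_le_sum) auto
  with u assms(6) have "5 < n"
    by simp
  have "avm (R33 n) < real 7 / real 3"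
    by (rule avm_less_frac) (simp_all add: maximal_matchings_R33[OF \<open>5 < n\<close>])
  also have "\<dots> < avm (pendant_graph k)"
    by (rule frac_less_avm) (simp_all add: maximal_matchings_pendant_graph_bound[OF u outside_u])
  finally show ?thesis .
qed

end
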